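(* Let $R$ be a poset and $P$ a join-semilattice with a least element. The following are equivalent: (i) there is an order-embedding of $I(R)$ into $J(P)$ which preserves arbitrary joins; (ii) there is an order-embedding of $I(R)$ into $J(P)$; (iii) there is a map $g:I_{<\omega}(R)\to P$ such that for all $X,Y_1,\dots,Y_n\in I_{<\omega}(R)$: if $X\not\subseteq Y_1\cup\dots\cup Y_n$ then $g(X)\not\le g(Y_1)\vee\dots\vee g(Y_n)$; (iv) there is a map $h:R\to P$ such that for all $x,y_1,\dots,y_n\in R$: if $x\not\le y_i$ for every $1\le i\le n$, then $h(x)\not\le h(y_1)\vee\dots\vee h(y_n)$.
   Context: $I(R)$ is the set of initial segments of $R$ ordered by inclusion; $I_{<\omega}(R)$ is the set of finitely generated initial segments of $R$, i.e. those of the form $\downarrow A=\{x\in R:\exists a\in A,\ x\le a\}$ with $A$ finite. An ideal of $P$ is a non-empty up-directed initial segment; $J(P)$ is the set of ideals of $P$ ordered by inclusion. An order-embedding $f$ satisfies $x\le y\iff f(x)\le f(y)$. *)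

theory Defs
  imports Main
begin

text \<open>The poset R is a carrier set R with the order inherited from the type.\<close>

definition init_segs :: "'a::order set \<Rightarrow> 'a set set" where
  "init_segs R = {S. S \<subseteq> R \<and> (\<forall>x\<in>S. \<forall>y\<in>R. y \<le> x \<longrightarrow> y \<in> S)}"

definition down_set :: "'a::order set \<Rightarrow> 'a set \<Rightarrow> 'a set" where
  "down_set R A = {x\<in>R. \<exists>a\<in>A. x \<le> a}"

definition fin_init_segs :: "'a::order set \<Rightarrow> 'a set set" where
  "fin_init_segs R = {down_set R A | A. finite A \<and> A \<subseteq> R}"

definition order_ideals :: "'p::order set set" where
  "order_ideals = {I. I \<noteq> {} \<and> (\<forall>x\<in>I. \<forall>y. y \<le> x \<longrightarrow> y \<in> I)
                      \<and> (\<forall>x\<in>I. \<forall>y\<in>I. \<exists>z\<in>I. x \<le> z \<and> y \<le> z)}"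

definition ideal_join :: "'p::order set set \<Rightarrow> 'p set" where
  "ideal_join F = \<Inter>{I \<in> order_ideals. \<forall>S\<in>F. S \<subseteq> I}"

definition order_embedding_on :: "'a set set \<Rightarrow> 'b set set \<Rightarrow> ('a set \<Rightarrow> 'b set) \<Rightarrow> bool" where
  "order_embedding_on A B f \<longleftrightarrow> (\<forall>X\<in>A. f X \<in> B) \<and> (\<forall>X\<in>A. \<forall>Y\<in>A. X \<subseteq> Y \<longleftrightarrow> f X \<subseteq> f Y)"

definition joinl :: "'p::bounded_semilattice_sup_bot list \<Rightarrow> 'p" where
  "joinl xs = foldr sup xs bot"

end

theory Submission
  imports Defs
begin

text \<open>
  Condition (iv) says exactly that the principal ideal of \<open>h x\<close> is not covered by the ideal
  generated by the images of \<open>{y \<in> R. \<not> x \<le> y}\<close>. Hence an embedding of \<open>I(R)\<close> yields such an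
  \<open>h\<close> by separating the images of \<open>\<down>x\<close> and \<open>{y. \<not> x \<le> y}\<close>; conversely, \<open>S \<mapsto>\<close> the ideal
  generated by \<open>h ` S\<close> is an embedding, and it preserves arbitrary joins because generating an
  ideal commutes with unions. Condition (iii) is (iv) transported along \<open>x \<mapsto> \<down>x\<close>; in the other
  direction \<open>g X\<close> is the join of \<open>h\<close> over a finite generating set of \<open>X\<close>.
\<close>

definition separating_map :: "'a::order set \<Rightarrow> ('a \<Rightarrow> 'p::bounded_semilattice_sup_bot) \<Rightarrow> bool" where
  "separating_map R h \<longleftrightarrow> (\<forall>x\<in>R. \<forall>ys. set ys \<subseteq> R \<longrightarrow>
     (\<forall>y\<in>set ys. \<not> x \<le> y) \<longrightarrow> \<not> h x \<le> joinl (map h ys))"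

definition cover_separating_map :: "'a set set \<Rightarrow> ('a set \<Rightarrow> 'p::bounded_semilattice_sup_bot) \<Rightarrow> bool" where
  "cover_separating_map \<X> g \<longleftrightarrow> (\<forall>X\<in>\<X>. \<forall>Ys. set Ys \<subseteq> \<X> \<longrightarrow>
     \<not> X \<subseteq> \<Union>(set Ys) \<longrightarrow> \<not> g X \<le> joinl (map g Ys))"

definition ideal_of :: "'p::bounded_semilattice_sup_bot set \<Rightarrow> 'p set" where
  "ideal_of A = {p. \<exists>xs. set xs \<subseteq> A \<and> p \<le> joinl xs}"

lemma joinl_le_iff: "joinl xs \<le> z \<longleftrightarrow> (\<forall>x\<in>set xs. x \<le> z)"
  by (induction xs) (auto simp: joinl_def)

lemma le_joinl: "x \<in> set xs \<Longrightarrow> x \<le> joinl xs"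
  using joinl_le_iff[of xs "joinl xs"] by auto

lemma joinl_mono: "set xs \<subseteq> set ys \<Longrightarrow> joinl xs \<le> joinl ys"
  by (auto simp: joinl_le_iff intro: le_joinl)

lemma joinl_concat: "joinl (concat xss) = joinl (map joinl xss)"
proof (rule order.antisym)
  show "joinl (concat xss) \<le> joinl (map joinl xss)"
    unfolding joinl_le_iff by (auto intro: order_trans[OF le_joinl le_joinl])
  show "joinl (map joinl xss) \<le> joinl (concat xss)"
    unfolding joinl_le_iff using joinl_mono[of _ "concat xss"] by auto
qed

lemma ideal_down_closed: "I \<in> order_ideals \<Longrightarrow> x \<in> I \<Longrightarrow> y \<le> x \<Longrightarrow> y \<in> I"
  unfolding order_ideals_def by auto

lemma ideal_bot:
  fixes I :: "'p::order_bot set"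
  assumes "I \<in> order_ideals"
  shows "bot \<in> I"
proof -
  obtain x where "x \<in> I"
    using assms by (auto simp: order_ideals_def)
  then show ?thesis
    using ideal_down_closed[OF assms] bot_least by blast
qed

lemma ideal_sup_closed:
  fixes x y :: "'p::semilattice_sup"
  assumes "I \<in> order_ideals" "x \<in> I" "y \<in> I"
  shows "sup x y \<in> I"
proof -
  have "\<exists>z\<in>I. x \<le> z \<and> y \<le> z"
    using assms by (auto simp: order_ideals_def)
  then obtain z where "z \<in> I" "x \<le> z" "y \<le> z" by blast
  then show ?thesis using assms(1) ideal_down_closed[of I z "sup x y"] by simp
qed

lemma ideal_joinl_closed: "I \<in> order_ideals \<Longrightarrow> set xs \<subseteq> I \<Longrightarrow> joinl xs \<in> I"
  by (induction xs) (auto simp: joinl_def ideal_bot ideal_sup_closed)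

lemma ideal_of_in_order_ideals: "ideal_of A \<in> order_ideals"
  unfolding order_ideals_def
proof (intro CollectI conjI ballI allI impI)
  have "bot \<in> ideal_of A"
    unfolding ideal_of_def by (auto intro!: exI[of _ "[]"])
  then show "ideal_of A \<noteq> {}" by blast
next
  fix x y assume "x \<in> ideal_of A" "y \<le> x"
  then show "y \<in> ideal_of A"
    unfolding ideal_of_def by (auto intro: order_trans)
next
  fix x y assume "x \<in> ideal_of A" "y \<in> ideal_of A"
  then obtain xs ys where xs: "set xs \<subseteq> A" "x \<le> joinl xs" and ys: "set ys \<subseteq> A" "y \<le> joinl ys"
    unfolding ideal_of_def by auto
  have "joinl (xs @ ys) \<in> ideal_of A"
    using xs ys unfolding ideal_of_def by (auto intro!: exI[of _ "xs @ ys"])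
  moreover have "x \<le> joinl (xs @ ys)" "y \<le> joinl (xs @ ys)"
    using xs ys joinl_mono[of xs "xs @ ys"] joinl_mono[of ys "xs @ ys"] by auto
  ultimately show "\<exists>z\<in>ideal_of A. x \<le> z \<and> y \<le> z"
    by blast
qed

lemma subset_ideal_of: "A \<subseteq> ideal_of A"
  unfolding ideal_of_def by (auto intro: exI[of _ "[_]"] simp: joinl_def)

lemma ideal_of_mono: "A \<subseteq> B \<Longrightarrow> ideal_of A \<subseteq> ideal_of B"
  unfolding ideal_of_def by blast

lemma ideal_of_least:
  assumes "I \<in> order_ideals" "A \<subseteq> I"
  shows "ideal_of A \<subseteq> I"
proof
  fix p assume "p \<in> ideal_of A"
  then obtain xs where "set xs \<subseteq> A" "p \<le> joinl xs"
    unfolding ideal_of_def by blast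
  then show "p \<in> I"
    using ideal_joinl_closed[OF assms(1)] ideal_down_closed[OF assms(1)] assms(2) by blast
qed

lemma ideal_of_Union: "ideal_of (\<Union>\<A>) = ideal_join (ideal_of ` \<A>)"
  unfolding ideal_join_def
proof
  show "\<Inter>{I \<in> order_ideals. \<forall>S\<in>ideal_of ` \<A>. S \<subseteq> I} \<subseteq> ideal_of (\<Union>\<A>)"
  proof (rule Inter_lower, intro CollectI conjI ballI)
    show "ideal_of (\<Union>\<A>) \<in> order_ideals"
      by (rule ideal_of_in_order_ideals)
    fix S assume "S \<in> ideal_of ` \<A>"
    then show "S \<subseteq> ideal_of (\<Union>\<A>)"
      using ideal_of_mono[OF Union_upper] by blast
  qed
  show "ideal_of (\<Union>\<A>) \<subseteq> \<Inter>{I \<in> order_ideals. \<forall>S\<in>ideal_of ` \<A>. S \<subseteq> I}"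
  proof (rule Inter_greatest)
    fix I assume "I \<in> {I \<in> order_ideals. \<forall>S\<in>ideal_of ` \<A>. S \<subseteq> I}"
    then have "I \<in> order_ideals" "\<Union>\<A> \<subseteq> I"
      using subset_ideal_of by blast+
    then show "ideal_of (\<Union>\<A>) \<subseteq> I"
      by (rule ideal_of_least)
  qed
qed

lemma mem_ideal_of_image_iff:
  "p \<in> ideal_of (h ` S) \<longleftrightarrow> (\<exists>ys. set ys \<subseteq> S \<and> p \<le> joinl (map h ys))"
proof
  assume "p \<in> ideal_of (h ` S)"
  then obtain xs where xs: "set xs \<subseteq> h ` S" "p \<le> joinl xs"
    unfolding ideal_of_def by blast
  have "\<exists>ys. set ys \<subseteq> S \<and> xs = map h ys"
    using xs(1) by (induction xs) (auto, metis insert_subset list.set(2) list.map(2))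
  then show "\<exists>ys. set ys \<subseteq> S \<and> p \<le> joinl (map h ys)"
    using xs(2) by blast
next
  assume "\<exists>ys. set ys \<subseteq> S \<and> p \<le> joinl (map h ys)"
  then show "p \<in> ideal_of (h ` S)"
    unfolding ideal_of_def by (metis (mono_tags, lifting) image_mono mem_Collect_eq set_map)
qed

lemma down_set_Union: "down_set R (\<Union>\<A>) = (\<Union>A\<in>\<A>. down_set R A)"
  unfolding down_set_def by blast

lemma principal_in_init_segs: "down_set R {x} \<in> init_segs R"
  unfolding down_set_def init_segs_def by auto

lemma principal_in_fin_init_segs: "x \<in> R \<Longrightarrow> down_set R {x} \<in> fin_init_segs R"
  unfolding fin_init_segs_def by blast

lemma not_above_in_init_segs: "{y\<in>R. \<not> x \<le> y} \<in> init_segs R"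
  unfolding init_segs_def using order_trans by blast

lemma fin_init_segs_generated:
  assumes "X \<in> fin_init_segs R"
  obtains xs where "set xs \<subseteq> R" "down_set R (set xs) = X"
proof -
  obtain A where A: "finite A" "A \<subseteq> R" "X = down_set R A"
    using assms unfolding fin_init_segs_def by blast
  moreover obtain xs where "set xs = A"
    using A(1) finite_list by blast
  ultimately show thesis using that by blast
qed

lemma order_embedding_imp_separating_map:
  fixes f :: "'a::order set \<Rightarrow> 'p::bounded_semilattice_sup_bot set"
  assumes f: "order_embedding_on (init_segs R) order_ideals f"
  shows "\<exists>h :: 'a \<Rightarrow> 'p. separating_map R h"
proof -
  let ?D = "\<lambda>x. down_set R {x}" and ?N = "\<lambda>x. {y\<in>R. \<not> x \<le> y}"
  have f_ideal: "\<And>X. X \<in> init_segs R \<Longrightarrow> f X \<in> order_ideals"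
    and f_reflects: "\<And>X Y. X \<in> init_segs R \<Longrightarrow> Y \<in> init_segs R \<Longrightarrow> f X \<subseteq> f Y \<longleftrightarrow> X \<subseteq> Y"
    using f unfolding order_embedding_on_def by auto
  note ideal = f_ideal[OF not_above_in_init_segs]
  note reflects = f_reflects[OF principal_in_init_segs not_above_in_init_segs]
  have "\<exists>p. p \<in> f (?D x) \<and> p \<notin> f (?N x)" if "x \<in> R" for x
  proof -
    have "\<not> ?D x \<subseteq> ?N x"
      using that by (auto simp: down_set_def)
    then show ?thesis
      using reflects[of x x] by blast
  qed
  then obtain h where h: "\<And>x. x \<in> R \<Longrightarrow> h x \<in> f (?D x) \<and> h x \<notin> f (?N x)"
    by metis
  have "separating_map R h"
    unfolding separating_map_def
  proof (intro ballI allI impI notI)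
    fix x ys assume x: "x \<in> R" and ys: "set ys \<subseteq> R" and not_above: "\<forall>y\<in>set ys. \<not> x \<le> y"
      and le: "h x \<le> joinl (map h ys)"
    have "?D y \<subseteq> ?N x" if "y \<in> set ys" for y
    proof
      fix z assume "z \<in> ?D y"
      then have "z \<in> R" "z \<le> y"
        by (auto simp: down_set_def)
      then show "z \<in> ?N x"
        using order_trans[of x z y] not_above that by blast
    qed
    then have "set (map h ys) \<subseteq> f (?N x)"
      using h ys reflects by fastforce
    then have "h x \<in> f (?N x)"
      using ideal_joinl_closed[OF ideal] ideal_down_closed[OF ideal] le by blast
    then show False
      using h x by blast
  qed
  then show ?thesis by blast
qed

lemma separating_map_join_embedding:
  fixes h :: "'a::order \<Rightarrow> 'p::bounded_semilattice_sup_bot"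
  assumes h: "separating_map R h"
  shows "order_embedding_on (init_segs R) order_ideals (\<lambda>S. ideal_of (h ` S))"
    and "ideal_of (h ` \<Union>\<S>) = ideal_join ((\<lambda>S. ideal_of (h ` S)) ` \<S>)"
proof -
  have reflects: "S \<subseteq> T" if S: "S \<in> init_segs R" and T: "T \<in> init_segs R"
    and le: "ideal_of (h ` S) \<subseteq> ideal_of (h ` T)" for S T
  proof
    fix x assume "x \<in> S"
    then have x: "x \<in> R"
      using S unfolding init_segs_def by blast
    have "h x \<in> ideal_of (h ` T)"
      using \<open>x \<in> S\<close> subset_ideal_of le by blast
    then obtain ys where ys: "set ys \<subseteq> T" "h x \<le> joinl (map h ys)"
      unfolding mem_ideal_of_image_iff by blast
    have T_sub: "T \<subseteq> R" and T_down: "\<And>t y. t \<in> T \<Longrightarrow> y \<in> R \<Longrightarrow> y \<le> t \<Longrightarrow> y \<in> T"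
      using T unfolding init_segs_def by blast+
    show "x \<in> T"
    proof (rule ccontr)
      assume "x \<notin> T"
      then have "\<forall>y\<in>set ys. \<not> x \<le> y"
        using ys(1) T_down x by blast
      moreover have "set ys \<subseteq> R"
        using ys(1) T_sub by blast
      ultimately show False
        using h x ys(2) unfolding separating_map_def by blast
    qed
  qed
  show "order_embedding_on (init_segs R) order_ideals (\<lambda>S. ideal_of (h ` S))"
    unfolding order_embedding_on_def
  proof (intro conjI ballI iffI)
    fix S T :: "'a set" assume "S \<subseteq> T"
    then show "ideal_of (h ` S) \<subseteq> ideal_of (h ` T)"
      by (intro ideal_of_mono image_mono)
  qed (simp_all add: ideal_of_in_order_ideals reflects)
  show "ideal_of (h ` \<Union>\<S>) = ideal_join ((\<lambda>S. ideal_of (h ` S)) ` \<S>)"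
    by (simp add: image_Union ideal_of_Union image_image)
qed

lemma cover_separating_imp_separating_map:
  assumes g: "cover_separating_map (fin_init_segs R) g"
  shows "separating_map R (\<lambda>x. g (down_set R {x}))"
  unfolding separating_map_def
proof (intro ballI allI impI)
  fix x ys assume x: "x \<in> R" and ys: "set ys \<subseteq> R" and not_above: "\<forall>y\<in>set ys. \<not> x \<le> y"
  let ?Ys = "map (\<lambda>y. down_set R {y}) ys"
  have "\<not> down_set R {x} \<subseteq> \<Union>(set ?Ys)"
    using x not_above by (auto simp: down_set_def)
  moreover have "set ?Ys \<subseteq> fin_init_segs R"
    using ys principal_in_fin_init_segs by auto
  ultimately have "\<not> g (down_set R {x}) \<le> joinl (map g ?Ys)"
    using g principal_in_fin_init_segs[OF x] unfolding cover_separating_map_def by blast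
  then show "\<not> g (down_set R {x}) \<le> joinl (map (\<lambda>x. g (down_set R {x})) ys)"
    by (simp add: comp_def)
qed

lemma separating_map_imp_cover_separating:
  fixes h :: "'a::order \<Rightarrow> 'p::bounded_semilattice_sup_bot"
  assumes h: "separating_map R h"
  shows "\<exists>g :: 'a set \<Rightarrow> 'p. cover_separating_map (fin_init_segs R) g"
proof -
  obtain L where L: "\<And>X. X \<in> fin_init_segs R \<Longrightarrow> set (L X) \<subseteq> R \<and> down_set R (set (L X)) = X"
    using fin_init_segs_generated by metis
  have "cover_separating_map (fin_init_segs R) (\<lambda>X. joinl (map h (L X)))"
    unfolding cover_separating_map_def
  proof (intro ballI allI impI notI)
    fix X Ys assume X: "X \<in> fin_init_segs R" and Ys: "set Ys \<subseteq> fin_init_segs R"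
      and not_covered: "\<not> X \<subseteq> \<Union>(set Ys)"
      and le: "joinl (map h (L X)) \<le> joinl (map (\<lambda>X. joinl (map h (L X))) Ys)"
    let ?zs = "concat (map L Ys)"
    obtain x where x: "x \<in> X" "x \<notin> \<Union>(set Ys)"
      using not_covered by blast
    then obtain a where a: "a \<in> set (L X)" "x \<le> a" "x \<in> R"
      using L[OF X] unfolding down_set_def by blast
    have "down_set R (set ?zs) = \<Union>(set Ys)"
      using L Ys by (auto simp: down_set_Union)
    then have "\<forall>z\<in>set ?zs. \<not> a \<le> z"
      using a x(2) unfolding down_set_def by (blast dest: order_trans)
    moreover have "set ?zs \<subseteq> R"
      using L Ys by auto
    moreover have "h a \<le> joinl (map h ?zs)"
    proof -
      have "h a \<le> joinl (map h (L X))"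
        using a(1) by (simp add: le_joinl)
      also note le
      also have "joinl (map (\<lambda>X. joinl (map h (L X))) Ys) = joinl (map h ?zs)"
        by (simp add: joinl_concat map_concat comp_def)
      finally show ?thesis .
    qed
    ultimately show False
      using h a L[OF X] unfolding separating_map_def by blast
  qed
  then show ?thesis by blast
qed

theorem lemma1p2:
  fixes R :: "'a::order set"
  shows
   "let
      ci = (\<exists>f. order_embedding_on (init_segs R) (order_ideals::'p::bounded_semilattice_sup_bot set set) f
                \<and> (\<forall>\<S>\<subseteq>init_segs R. f (\<Union>\<S>) = ideal_join (f ` \<S>)));
      cii = (\<exists>f. order_embedding_on (init_segs R) (order_ideals::'p set set) f);
      ciii = (\<exists>g::'a set \<Rightarrow> 'p. \<forall>X\<in>fin_init_segs R. \<forall>Ys. set Ys \<subseteq> fin_init_segs R \<longrightarrow>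
                 \<not> X \<subseteq> \<Union>(set Ys) \<longrightarrow> \<not> g X \<le> joinl (map g Ys));
      civ = (\<exists>h::'a \<Rightarrow> 'p. \<forall>x\<in>R. \<forall>ys. set ys \<subseteq> R \<longrightarrow>
                 (\<forall>y\<in>set ys. \<not> x \<le> y) \<longrightarrow> \<not> h x \<le> joinl (map h ys))
    in (ci \<longleftrightarrow> cii) \<and> (cii \<longleftrightarrow> ciii) \<and> (ciii \<longleftrightarrow> civ)"
proof -
  have ii_iv: "\<exists>h :: 'a \<Rightarrow> 'p. separating_map R h"
    if "order_embedding_on (init_segs R) (order_ideals :: 'p set set) f" for f
    using order_embedding_imp_separating_map[OF that] .
  have iv_i: "\<exists>f. order_embedding_on (init_segs R) (order_ideals :: 'p set set) f
                \<and> (\<forall>\<S>\<subseteq>init_segs R. f (\<Union>\<S>) = ideal_join (f ` \<S>))"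
    if "separating_map R (h :: 'a \<Rightarrow> 'p)" for h
    using separating_map_join_embedding[OF that] by blast
  have iii_iv: "\<exists>h :: 'a \<Rightarrow> 'p. separating_map R h"
    if "cover_separating_map (fin_init_segs R) (g :: 'a set \<Rightarrow> 'p)" for g
    using cover_separating_imp_separating_map[OF that] by blast
  have iv_iii: "\<exists>g :: 'a set \<Rightarrow> 'p. cover_separating_map (fin_init_segs R) g"
    if "separating_map R (h :: 'a \<Rightarrow> 'p)" for h
    using separating_map_imp_cover_separating[OF that] .
  show ?thesis
    unfolding Let_def separating_map_def[symmetric] cover_separating_map_def[symmetric]
    using ii_iv iv_i iii_iv iv_iii by blast
qed

end
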